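(* Let $W$ be an sc-Banach space, $E=\mathbb R^n\oplus W$, $C=[0,\infty)^n\oplus W$, and identify $W$ with $\{0\}\oplus W$. Let $N$ be a finite-dimensional subspace of $E$ in good position to $C$, with good complement $N^\perp$, and let $\widetilde N$ be an algebraic complement of $N\cap W$ in $N$, so that $N=\widetilde N\oplus(N\cap W)$ and $E=\widetilde N\oplus(N\cap W)\oplus N^\perp$. Then $\widetilde N$ is in good position to $C$, and $\widetilde N^\perp=(N\cap W)\oplus N^\perp$ is a good complement of $\widetilde N$ in $E$.
   Context: An sc-Banach space is a Banach space $W$ with nested Banach spaces $W=W_0\supset W_1\supset\cdots$, compact inclusions $W_n\to W_m$ ($m<n$), $\bigcap W_m$ dense in each $W_m$; $E$ has levels $\mathbb R^n\oplus W_m$ and $\|\cdot\|$ is its level-$0$ norm. An sc-complement of a closed subspace $N$ is a closed subspace $N^\perp$ with $E_m=(N\cap E_m)\oplus(N^\perp\cap E_m)$ topologically for all $m$, both pieces sc-subspaces. A closed subspace $N$ is in good position to $C$ if $N\cap C$ has nonempty interior in $N$ and there exist an sc-complement $N^\perp$ and a constant $c>0$ such that for every $(n,m)\in N\oplus N^\perp$ with $\|m\|\le c\|n\|$: $n+m\in C$ iff $n\in C$; such an $N^\perp$ is called a good complement of $N$. *)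

theory Defs
  imports "HOL-Analysis.Analysis"
begin

definition sc_banach :: "(nat \<Rightarrow> 'w::banach set) \<Rightarrow> (nat \<Rightarrow> 'w \<Rightarrow> real) \<Rightarrow> bool" where
  "sc_banach W nrm \<longleftrightarrow>
     W 0 = UNIV \<and> (\<forall>x. nrm 0 x = norm x) \<and>
     (\<forall>m. subspace (W m)) \<and>
     (\<forall>m. \<forall>x\<in>W m. \<forall>y\<in>W m. nrm m (x + y) \<le> nrm m x + nrm m y) \<and>
     (\<forall>m. \<forall>x\<in>W m. \<forall>r. nrm m (r *\<^sub>R x) = \<bar>r\<bar> * nrm m x) \<and>
     (\<forall>m. \<forall>x\<in>W m. nrm m x = 0 \<longrightarrow> x = 0) \<and>
     (\<forall>m s. (\<forall>k. s k \<in> W m) \<and>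
            (\<forall>e>0. \<exists>K. \<forall>i\<ge>K. \<forall>j\<ge>K. nrm m (s i - s j) < e)
            \<longrightarrow> (\<exists>l\<in>W m. (\<lambda>k. nrm m (s k - l)) \<longlonglongrightarrow> 0)) \<and>
     (\<forall>m. W (Suc m) \<subseteq> W m) \<and>
     (\<forall>m n. m < n \<longrightarrow>
        (\<forall>s. (\<forall>k. s k \<in> W n) \<and> bounded (range (\<lambda>k. nrm n (s k))) \<longrightarrow>
             (\<exists>(r::nat\<Rightarrow>nat) l. strict_mono r \<and> l \<in> W m \<and> (\<lambda>k. nrm m (s (r k) - l)) \<longlonglongrightarrow> 0))) \<and>
     (\<forall>m. \<forall>x\<in>W m. \<forall>e>0. \<exists>y\<in>(\<Inter>k. W k). nrm m (x - y) < e)"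

text \<open>Levels of E = R^n (+) W and their norms (level 0 norm = the product norm).\<close>
definition Elev :: "(nat \<Rightarrow> 'w set) \<Rightarrow> nat \<Rightarrow> ((real^'n) \<times> 'w) set" where
  "Elev W m = {x. snd x \<in> W m}"

definition lnorm :: "(nat \<Rightarrow> 'w \<Rightarrow> real) \<Rightarrow> nat \<Rightarrow> (real^'n) \<times> 'w \<Rightarrow> real" where
  "lnorm nrm m x = sqrt ((norm (fst x))\<^sup>2 + (nrm m (snd x))\<^sup>2)"

definition Cq :: "((real^'n) \<times> 'w) set" where
  "Cq = {x. \<forall>i. 0 \<le> fst x $ i}"

definition Wsub :: "((real^'n) \<times> 'w) set" where
  "Wsub = {x. fst x = 0}"

text \<open>sc-subspace: closed linear subspace F such that F_m = F \<inter> E_m makes F an sc-Banach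
  space, i.e. F_m is closed in E_m and F_\<infinity> is dense in each F_m.\<close>
definition sc_subspace :: "(nat \<Rightarrow> 'w::banach set) \<Rightarrow> (nat \<Rightarrow> 'w \<Rightarrow> real)
    \<Rightarrow> ((real^'n) \<times> 'w) set \<Rightarrow> bool" where
  "sc_subspace W nrm F \<longleftrightarrow>
     subspace F \<and> closed F \<and>
     (\<forall>m s l. (\<forall>k. s k \<in> F \<inter> Elev W m) \<and> l \<in> Elev W m \<and>
              (\<lambda>k. lnorm nrm m (s k - l)) \<longlonglongrightarrow> 0 \<longrightarrow> l \<in> F) \<and>
     (\<forall>m. \<forall>x\<in>F \<inter> Elev W m. \<forall>e>0. \<exists>y\<in>F \<inter> (\<Inter>k. Elev W k). lnorm nrm m (x - y) < e)"

text \<open>sc-complement M of N: E_m = (N \<inter> E_m) (+) (M \<inter> E_m) topologically for all m.\<close>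
definition sc_complement :: "(nat \<Rightarrow> 'w::banach set) \<Rightarrow> (nat \<Rightarrow> 'w \<Rightarrow> real)
    \<Rightarrow> ((real^'n) \<times> 'w) set \<Rightarrow> ((real^'n) \<times> 'w) set \<Rightarrow> bool" where
  "sc_complement W nrm N M \<longleftrightarrow>
     sc_subspace W nrm N \<and> sc_subspace W nrm M \<and> N \<inter> M = {0} \<and>
     (\<forall>m. \<forall>x\<in>Elev W m. \<exists>a\<in>N \<inter> Elev W m. \<exists>b\<in>M \<inter> Elev W m. x = a + b) \<and>
     (\<forall>m. \<exists>K. \<forall>a\<in>N \<inter> Elev W m. \<forall>b\<in>M \<inter> Elev W m.
            lnorm nrm m a \<le> K * lnorm nrm m (a + b))"

definition good_complement :: "(nat \<Rightarrow> 'w::banach set) \<Rightarrow> (nat \<Rightarrow> 'w \<Rightarrow> real)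
    \<Rightarrow> ((real^'n) \<times> 'w) set \<Rightarrow> ((real^'n) \<times> 'w) set \<Rightarrow> bool" where
  "good_complement W nrm N M \<longleftrightarrow>
     sc_complement W nrm N M \<and>
     (\<exists>c>0. \<forall>n\<in>N. \<forall>m\<in>M. norm m \<le> c * norm n \<longrightarrow> (n + m \<in> Cq \<longleftrightarrow> n \<in> Cq))"

definition good_position :: "(nat \<Rightarrow> 'w::banach set) \<Rightarrow> (nat \<Rightarrow> 'w \<Rightarrow> real)
    \<Rightarrow> ((real^'n) \<times> 'w) set \<Rightarrow> bool" where
  "good_position W nrm N \<longleftrightarrow>
     (\<exists>U. openin (top_of_set N) U \<and> U \<noteq> {} \<and> U \<subseteq> N \<inter> Cq) \<and>
     (\<exists>M. good_complement W nrm N M)"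

end

theory Submission
  imports Defs
begin

text \<open>Since \<open>N\<close> is finite-dimensional and \<open>N \<inter> E\<^sub>\<infinity>\<close> is dense in it, \<open>N\<close> consists of smooth
  points. On \<open>Nt\<close> the projection to \<open>\<real>\<^sup>n\<close> is injective, so every level norm on \<open>Nt\<close> is
  bounded by the norm of the \<open>\<real>\<^sup>n\<close>-part; this makes \<open>Nt\<close> an sc-subspace and, combined with the
  bounds of the splitting \<open>E = N \<oplus> N\<^sup>\<perp>\<close>, gives the bounds of the splitting
  \<open>E = Nt \<oplus> ((N \<inter> W) \<oplus> N\<^sup>\<perp>)\<close>. Membership in \<open>C\<close> only depends on the \<open>\<real>\<^sup>n\<close>-part, so
  the \<open>N \<inter> W\<close>-component of a point is irrelevant both for the cone condition and for the
  interior of \<open>Nt \<inter> C\<close>.\<close>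

lemma infdist_subspace_scaled_le:
  fixes b u :: "'a::real_normed_vector"
  assumes "subspace S" "u \<in> S"
  shows "\<bar>t\<bar> * infdist b S \<le> norm (t *\<^sub>R b + u)"
proof (cases "t = 0")
  case False
  have "- (1/t) *\<^sub>R u \<in> S" using assms by (simp add: subspace_scale subspace_neg)
  then have "\<bar>t\<bar> * infdist b S \<le> \<bar>t\<bar> * norm (b + (1/t) *\<^sub>R u)"
    using infdist_le[of "- (1/t) *\<^sub>R u" S b] by (simp add: dist_norm mult_left_mono)
  also have "\<dots> = norm (t *\<^sub>R b + u)"
    using False by (simp flip: norm_scaleR add: scaleR_add_right)
  finally show ?thesis .
qed simp

lemma closed_span_finite:
  fixes B :: "'a::real_normed_vector set"
  assumes "finite B"
  shows "closed (span B)"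
  using assms
proof (induction B rule: finite_induct)
  case (insert b B)
  show ?case
  proof (cases "b \<in> span B")
    case True
    then show ?thesis using insert.IH by (simp add: span_redundant)
  next
    case False
    define d where "d = infdist b (span B)"
    have "d > 0"
      unfolding d_def using infdist_pos_not_in_closed[OF insert.IH _ False] span_zero by blast
    show ?thesis unfolding closed_sequential_limits
    proof (intro allI impI, elim conjE)
      fix s l assume s: "\<forall>k. s k \<in> span (insert b B)" and "s \<longlonglongrightarrow> l"
      have "\<forall>k. \<exists>c. s k - c *\<^sub>R b \<in> span B" using s by (simp add: span_breakdown_eq)
      then obtain t where t: "\<And>k. s k - t k *\<^sub>R b \<in> span B" by metis
      have t_lipschitz: "dist (t i) (t j) \<le> dist (s i) (s j) / d" for i j
      proof -
        have "\<bar>t i - t j\<bar> * d \<le> norm ((t i - t j) *\<^sub>R b + ((s i - t i *\<^sub>R b) - (s j - t j *\<^sub>R b)))"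
          unfolding d_def using span_diff[OF t t] by (intro infdist_subspace_scaled_le) auto
        then show ?thesis
          using \<open>d > 0\<close> by (simp add: dist_norm pos_le_divide_eq algebra_simps)
      qed
      have "Cauchy t"
      proof (rule metric_CauchyI)
        fix e :: real assume "e > 0"
        then obtain K where K: "\<forall>i\<ge>K. \<forall>j\<ge>K. dist (s i) (s j) < e * d"
          using metric_CauchyD[OF LIMSEQ_imp_Cauchy[OF \<open>s \<longlonglongrightarrow> l\<close>]] \<open>d > 0\<close>
          by (meson mult_pos_pos)
        have "dist (t i) (t j) < e" if "i \<ge> K" "j \<ge> K" for i j
          using t_lipschitz[of i j] K that \<open>d > 0\<close> by (smt (verit) pos_divide_less_eq)
        then show "\<exists>K. \<forall>i\<ge>K. \<forall>j\<ge>K. dist (t i) (t j) < e" by blast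
      qed
      then obtain t0 where "t \<longlonglongrightarrow> t0" using convergent_def Cauchy_convergent by blast
      then have "(\<lambda>k. s k - t k *\<^sub>R b) \<longlonglongrightarrow> l - t0 *\<^sub>R b"
        by (intro tendsto_intros \<open>s \<longlonglongrightarrow> l\<close>)
      then have "l - t0 *\<^sub>R b \<in> span B"
        by (rule closed_sequentially[OF insert.IH, rotated]) (rule t)
      then show "l \<in> span (insert b B)" by (metis span_breakdown_eq)
    qed
  qed
qed simp

lemma closed_subspace_of_finite_span:
  fixes S :: "'a::real_normed_vector set"
  assumes "subspace S" "S \<subseteq> span B" "finite B"
  shows "closed S"
proof -
  obtain B' where B': "B' \<subseteq> S" "independent B'" "S \<subseteq> span B'"
    by (rule basis_exists)
  then have "finite B'"
    using independent_span_bound[OF assms(3)] assms(2) by blast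
  moreover have "S = span B'"
    using B' assms(1) by (simp add: span_minimal subset_antisym)
  ultimately show ?thesis by (simp add: closed_span_finite)
qed

lemma euclidean_seminorm_le_norm:
  fixes p :: "'a::euclidean_space \<Rightarrow> real"
  assumes add: "\<And>x y. p (x + y) \<le> p x + p y"
    and scale: "\<And>x r. p (r *\<^sub>R x) = \<bar>r\<bar> * p x"
  shows "\<exists>K\<ge>0. \<forall>x. p x \<le> K * norm x"
proof -
  have p_sum: "p (sum f I) \<le> (\<Sum>i\<in>I. p (f i))" if "finite I" for f :: "'b \<Rightarrow> 'a" and I
    using that
  proof (induction I rule: finite_induct)
    case empty
    then show ?case using scale[of 0 0] by simp
  next
    case (insert i I)
    then show ?case using add[of "f i" "sum f I"] by simp
  qed
  define K where "K = (\<Sum>b\<in>Basis. \<bar>p b\<bar>)"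
  have "p x \<le> K * norm x" for x
  proof -
    have "p x = p (\<Sum>b\<in>Basis. (x \<bullet> b) *\<^sub>R b)" by (simp add: euclidean_representation)
    also have "\<dots> \<le> (\<Sum>b\<in>Basis. \<bar>x \<bullet> b\<bar> * p b)"
      using p_sum[of Basis "\<lambda>b. (x \<bullet> b) *\<^sub>R b"] by (simp add: scale)
    also have "\<dots> \<le> (\<Sum>b\<in>Basis. norm x * \<bar>p b\<bar>)"
      by (intro sum_mono order_trans[OF mult_left_mono[OF abs_ge_self] mult_right_mono])
        (simp_all add: Basis_le_norm)
    finally show ?thesis by (simp add: K_def sum_distrib_left mult.commute)
  qed
  moreover have "K \<ge> 0" by (simp add: K_def sum_nonneg)
  ultimately show ?thesis by blast
qed

lemma linear_left_inverse_bounded: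
  fixes f :: "'a::real_vector \<Rightarrow> 'b::euclidean_space" and p :: "'a \<Rightarrow> real"
  assumes "subspace S" "linear f" "inj_on f S"
    and add: "\<And>x y. x \<in> S \<Longrightarrow> y \<in> S \<Longrightarrow> p (x + y) \<le> p x + p y"
    and scale: "\<And>x r. x \<in> S \<Longrightarrow> p (r *\<^sub>R x) = \<bar>r\<bar> * p x"
  obtains g K where "linear g" "range g \<subseteq> S" "\<And>x. x \<in> S \<Longrightarrow> g (f x) = x"
    "K \<ge> 0" "\<And>y. p (g y) \<le> K * norm y"
proof -
  obtain g where g: "range g \<subseteq> S" "linear g" "\<And>x. x \<in> S \<Longrightarrow> g (f x) = x"
    using linear_inj_on_left_inverse[OF \<open>linear f\<close>] \<open>inj_on f S\<close> \<open>subspace S\<close>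
    by (metis span_eq_iff)
  have "\<exists>K\<ge>0. \<forall>y. p (g y) \<le> K * norm y"
    using g(1) by (intro euclidean_seminorm_le_norm)
      (auto simp: linear_add[OF g(2)] linear_scale[OF g(2)] intro!: add scale)
  with g that show ?thesis by blast
qed

lemma le_0_if_le_times_null_seq:
  fixes f :: "nat \<Rightarrow> real"
  assumes "\<And>k. a \<le> C * f k" "f \<longlonglongrightarrow> 0"
  shows "a \<le> 0"
  using LIMSEQ_le_const[OF tendsto_mult_right_zero[OF assms(2)]] assms(1) by auto

lemma Cq_add_Wsub: "b \<in> Wsub \<Longrightarrow> x + b \<in> Cq \<longleftrightarrow> x \<in> Cq"
  unfolding Cq_def Wsub_def by simp

lemma subspace_Wsub: "subspace Wsub"
  unfolding subspace_def Wsub_def by simp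

lemma lnorm_nonneg: "0 \<le> lnorm nrm m x"
  unfolding lnorm_def by simp

lemma norm_fst_le_lnorm: "norm (fst x) \<le> lnorm nrm m x"
  unfolding lnorm_def by (simp add: real_le_rsqrt)

locale sc_levels =
  fixes W :: "nat \<Rightarrow> 'w::banach set" and nrm :: "nat \<Rightarrow> 'w \<Rightarrow> real"
  assumes sc_banach: "sc_banach W nrm"
begin

lemma W0_UNIV: "W 0 = UNIV"
  and nrm0: "nrm 0 x = norm x"
  and subspace_W: "subspace (W m)"
  and nrm_triangle: "x \<in> W m \<Longrightarrow> y \<in> W m \<Longrightarrow> nrm m (x + y) \<le> nrm m x + nrm m y"
  and nrm_scaleR: "x \<in> W m \<Longrightarrow> nrm m (r *\<^sub>R x) = \<bar>r\<bar> * nrm m x"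
  and nrm_eq_0: "x \<in> W m \<Longrightarrow> nrm m x = 0 \<Longrightarrow> x = 0"
  using sc_banach by (simp_all add: sc_banach_def)

lemma nrm_nonneg:
  assumes "x \<in> W m"
  shows "0 \<le> nrm m x"
proof -
  have "- x \<in> W m" using assms subspace_neg[OF subspace_W] by blast
  then have "nrm m (x + - x) \<le> nrm m x + nrm m (- x)" using assms nrm_triangle by blast
  moreover have "nrm m (- x) = nrm m x" using nrm_scaleR[OF assms, of "-1"] by simp
  moreover have "nrm m (x + - x) = 0" using nrm_scaleR[OF assms, of 0] by simp
  ultimately show ?thesis by simp
qed

lemma Elev0_UNIV: "Elev W 0 = UNIV"
  by (simp add: Elev_def W0_UNIV)

lemma subspace_Elev: "subspace (Elev W m)"
  using subspace_W[of m] unfolding Elev_def subspace_def by auto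

lemma subspace_smooth_Elev: "subspace (\<Inter>k. Elev W k)"
  by (simp add: subspace_Elev subspace_Int)

lemma lnorm0: "lnorm nrm 0 x = norm x"
  unfolding lnorm_def by (simp add: nrm0 norm_prod_def)

lemma lnorm_scaleR:
  assumes "x \<in> Elev W m"
  shows "lnorm nrm m (r *\<^sub>R x) = \<bar>r\<bar> * lnorm nrm m x"
proof -
  have "nrm m (r *\<^sub>R snd x) = \<bar>r\<bar> * nrm m (snd x)"
    using assms nrm_scaleR by (simp add: Elev_def)
  then have "lnorm nrm m (r *\<^sub>R x) = sqrt ((\<bar>r\<bar> * norm (fst x))\<^sup>2 + (\<bar>r\<bar> * nrm m (snd x))\<^sup>2)"
    unfolding lnorm_def by simp
  also have "\<dots> = sqrt (r\<^sup>2 * ((norm (fst x))\<^sup>2 + (nrm m (snd x))\<^sup>2))"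
    by (simp only: power_mult_distrib distrib_left power2_abs)
  also have "\<dots> = \<bar>r\<bar> * lnorm nrm m x" unfolding lnorm_def by (simp add: real_sqrt_mult)
  finally show ?thesis .
qed

lemma lnorm_zero: "lnorm nrm m 0 = 0"
  using lnorm_scaleR[OF subspace_0[OF subspace_Elev], of m 0] by simp

lemma lnorm_minus_commute:
  assumes "x \<in> Elev W m" "y \<in> Elev W m"
  shows "lnorm nrm m (x - y) = lnorm nrm m (y - x)"
proof -
  have "lnorm nrm m ((-1) *\<^sub>R (y - x)) = lnorm nrm m (y - x)"
    using lnorm_scaleR[OF subspace_diff[OF subspace_Elev assms(2,1)], of "-1"] by simp
  then show ?thesis by simp
qed

lemma lnorm_triangle:
  assumes "x \<in> Elev W m" "y \<in> Elev W m"
  shows "lnorm nrm m (x + y) \<le> lnorm nrm m x + lnorm nrm m y"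
proof -
  have W: "snd x \<in> W m" "snd y \<in> W m" using assms by (auto simp: Elev_def)
  define u v :: "real \<times> real"
    where "u = (norm (fst x), nrm m (snd x))" and "v = (norm (fst y), nrm m (snd y))"
  have A: "norm (fst x + fst y) \<le> fst (u + v)"
    by (simp add: u_def v_def norm_triangle_ineq)
  have B: "0 \<le> nrm m (snd x + snd y)" "nrm m (snd x + snd y) \<le> snd (u + v)"
    using W nrm_triangle nrm_nonneg subspace_add[OF subspace_W] by (auto simp: u_def v_def)
  have "lnorm nrm m (x + y) = sqrt ((norm (fst x + fst y))\<^sup>2 + (nrm m (snd x + snd y))\<^sup>2)"
    by (simp add: lnorm_def)
  also have "\<dots> \<le> sqrt ((fst (u + v))\<^sup>2 + (snd (u + v))\<^sup>2)"
    using A B by (intro real_sqrt_le_mono add_mono power_mono) auto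
  also have "\<dots> = norm (u + v)" by (simp only: norm_prod_def real_norm_def power2_abs)
  also have "\<dots> \<le> norm u + norm v" by (rule norm_triangle_ineq)
  also have "\<dots> = lnorm nrm m x + lnorm nrm m y"
    by (simp only: u_def v_def lnorm_def norm_prod_def real_norm_def power2_abs fst_conv snd_conv)
  finally show ?thesis .
qed

lemma lnorm_eq_0:
  assumes "x \<in> Elev W m" "lnorm nrm m x \<le> 0"
  shows "x = 0"
proof -
  have "(norm (fst x))\<^sup>2 + (nrm m (snd x))\<^sup>2 = 0"
    using assms(2) lnorm_nonneg[of nrm m x] unfolding lnorm_def
    by (metis add_nonneg_nonneg antisym real_sqrt_eq_zero_cancel_iff zero_le_power2)
  then have "norm (fst x) = 0" "nrm m (snd x) = 0"
    by (simp_all add: add_nonneg_eq_0_iff)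
  then show ?thesis
    using assms(1) nrm_eq_0 by (simp add: Elev_def prod_eq_iff)
qed

lemma closed_if_level0_closed:
  assumes "\<And>s l. \<forall>k. s k \<in> F \<Longrightarrow> (\<lambda>k. lnorm nrm 0 (s k - l)) \<longlonglongrightarrow> 0 \<Longrightarrow> l \<in> F"
  shows "closed F"
  unfolding closed_sequential_limits
proof (intro allI impI, elim conjE)
  fix s l assume s: "\<forall>k. s k \<in> F" and "s \<longlonglongrightarrow> l"
  then have "(\<lambda>k. lnorm nrm 0 (s k - l)) \<longlonglongrightarrow> 0"
    by (simp add: lnorm0 tendsto_norm_zero_iff LIM_zero_iff)
  with s show "l \<in> F" by (rule assms)
qed

end

lemma sc_subspace_subspace: "sc_subspace W nrm F \<Longrightarrow> subspace F"
  by (simp add: sc_subspace_def)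

lemma sc_subspace_dense:
  assumes "sc_subspace W nrm F" "x \<in> F \<inter> Elev W m" "e > 0"
  obtains y where "y \<in> F" "y \<in> (\<Inter>k. Elev W k)" "lnorm nrm m (x - y) < e"
proof -
  have "\<forall>m. \<forall>x\<in>F \<inter> Elev W m. \<forall>e>0. \<exists>y\<in>F \<inter> (\<Inter>k. Elev W k). lnorm nrm m (x - y) < e"
    using assms(1) by (simp add: sc_subspace_def)
  with assms(2,3) that show ?thesis by blast
qed

lemma sc_complementD:
  assumes "sc_complement W nrm N P"
  shows "sc_subspace W nrm N" "sc_subspace W nrm P" "N \<inter> P = {0}"
    and "x \<in> Elev W m \<Longrightarrow> \<exists>a\<in>N \<inter> Elev W m. \<exists>b\<in>P \<inter> Elev W m. x = a + b"
  using assms by (simp_all add: sc_complement_def)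

lemma sc_complementI:
  assumes "sc_subspace W nrm N" "sc_subspace W nrm P" "N \<inter> P = {0}"
    and "\<And>m x. x \<in> Elev W m \<Longrightarrow> \<exists>a\<in>N \<inter> Elev W m. \<exists>b\<in>P \<inter> Elev W m. x = a + b"
    and "\<And>m. \<exists>K. \<forall>a\<in>N \<inter> Elev W m. \<forall>b\<in>P \<inter> Elev W m. lnorm nrm m a \<le> K * lnorm nrm m (a + b)"
  shows "sc_complement W nrm N P"
  using assms by (simp add: sc_complement_def)

lemma sc_complement_bound:
  assumes "sc_complement W nrm N P"
  obtains K where "K \<ge> 0"
    "\<And>a b. a \<in> N \<inter> Elev W m \<Longrightarrow> b \<in> P \<inter> Elev W m \<Longrightarrow> lnorm nrm m a \<le> K * lnorm nrm m (a + b)"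
proof -
  have "\<exists>K. \<forall>a\<in>N \<inter> Elev W m. \<forall>b\<in>P \<inter> Elev W m. lnorm nrm m a \<le> K * lnorm nrm m (a + b)"
    using assms by (simp add: sc_complement_def)
  then obtain K where K: "\<forall>a\<in>N \<inter> Elev W m. \<forall>b\<in>P \<inter> Elev W m. lnorm nrm m a \<le> K * lnorm nrm m (a + b)"
    by blast
  have "K * lnorm nrm m x \<le> max K 0 * lnorm nrm m x" for x
    by (intro mult_right_mono) (auto simp: lnorm_nonneg)
  with K that[of "max K 0"] show ?thesis by (meson max.cobounded2 order_trans)
qed

context sc_levels
begin

lemma sc_subspaceI:
  assumes "subspace F"
    and level_closed: "\<And>m s l. \<forall>k. s k \<in> F \<inter> Elev W m \<Longrightarrow> l \<in> Elev W m \<Longrightarrow>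
      (\<lambda>k. lnorm nrm m (s k - l)) \<longlonglongrightarrow> 0 \<Longrightarrow> l \<in> F"
    and dense: "\<And>m x e. x \<in> F \<inter> Elev W m \<Longrightarrow> e > 0 \<Longrightarrow>
      \<exists>y\<in>F \<inter> (\<Inter>k. Elev W k). lnorm nrm m (x - y) < e"
  shows "sc_subspace W nrm F"
proof -
  have "closed F"
  proof (rule closed_if_level0_closed)
    fix s l assume "\<forall>k. s k \<in> F" "(\<lambda>k. lnorm nrm 0 (s k - l)) \<longlonglongrightarrow> 0"
    then show "l \<in> F" using level_closed[of s 0 l] by (simp add: Elev0_UNIV)
  qed
  with assms show ?thesis unfolding sc_subspace_def by blast
qed

lemma sc_complement_norm_bound:
  assumes "sc_complement W nrm N P"
  obtains K where "K \<ge> 0" "\<And>a b. a \<in> N \<Longrightarrow> b \<in> P \<Longrightarrow> norm a \<le> K * norm (a + b)"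
proof -
  obtain K where "K \<ge> 0" "\<And>a b. a \<in> N \<inter> Elev W 0 \<Longrightarrow> b \<in> P \<inter> Elev W 0 \<Longrightarrow>
      lnorm nrm 0 a \<le> K * lnorm nrm 0 (a + b)"
    using sc_complement_bound[OF assms] by metis
  with that show ?thesis by (simp add: Elev0_UNIV lnorm0)
qed

lemma finite_dim_sc_subspace_smooth:
  assumes "sc_subspace W nrm N" "N \<subseteq> span B" "finite B"
  shows "N \<subseteq> (\<Inter>k. Elev W k)"
proof -
  define S where "S = N \<inter> (\<Inter>k. Elev W k)"
  have "closed S"
    unfolding S_def using assms sc_subspace_subspace subspace_smooth_Elev
    by (intro closed_subspace_of_finite_span[of _ B] subspace_inter) auto
  have "x \<in> closure S" if "x \<in> N" for x
    unfolding closure_approachable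
  proof (intro allI impI)
    fix e :: real assume "e > 0"
    then obtain y where "y \<in> S" "lnorm nrm 0 (x - y) < e"
      using sc_subspace_dense[OF assms(1), of x 0 e] \<open>x \<in> N\<close> Elev0_UNIV unfolding S_def by blast
    then show "\<exists>y\<in>S. dist y x < e" by (auto simp: lnorm0 dist_norm norm_minus_commute)
  qed
  with \<open>closed S\<close> show ?thesis unfolding S_def by (auto simp: closure_closed)
qed

lemma level_left_inverse_fst:
  assumes "subspace F" "F \<subseteq> Elev W m" "inj_on fst F"
  obtains g K where "linear g" "range g \<subseteq> F" "\<And>x. x \<in> F \<Longrightarrow> g (fst x) = x"
    "K \<ge> 0" "\<And>y. lnorm nrm m (g y) \<le> K * norm y"
proof (rule linear_left_inverse_bounded[OF assms(1) linear_fst assms(3)])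
  show "lnorm nrm m (x + y) \<le> lnorm nrm m x + lnorm nrm m y" if "x \<in> F" "y \<in> F" for x y
    using that assms(2) by (intro lnorm_triangle) auto
  show "lnorm nrm m (r *\<^sub>R x) = \<bar>r\<bar> * lnorm nrm m x" if "x \<in> F" for x r
    using that assms(2) by (intro lnorm_scaleR) auto
qed (use that in blast)

lemma lnorm_le_norm_fst:
  assumes "subspace F" "F \<subseteq> Elev W m" "inj_on fst F"
  obtains K where "K \<ge> 0" "\<And>x. x \<in> F \<Longrightarrow> lnorm nrm m x \<le> K * norm (fst x)"
proof -
  obtain g K where "\<And>x. x \<in> F \<Longrightarrow> g (fst x) = x" "K \<ge> 0" "\<And>y. lnorm nrm m (g y) \<le> K * norm y"
    using level_left_inverse_fst[OF assms] by metis
  with that show ?thesis by metis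
qed

lemma sc_subspace_if_smooth_graph:
  assumes "subspace F" "F \<subseteq> (\<Inter>k. Elev W k)" "inj_on fst F"
  shows "sc_subspace W nrm F"
proof (rule sc_subspaceI[OF assms(1)])
  fix m s l
  assume s: "\<forall>k. s k \<in> F \<inter> Elev W m" and l: "l \<in> Elev W m"
    and lim: "(\<lambda>k. lnorm nrm m (s k - l)) \<longlonglongrightarrow> 0"
  have FE: "F \<subseteq> Elev W m" using assms(2) by blast
  obtain g K where g: "linear g" "range g \<subseteq> F" "\<And>x. x \<in> F \<Longrightarrow> g (fst x) = x"
    and K: "K \<ge> 0" "\<And>y. lnorm nrm m (g y) \<le> K * norm y"
    using level_left_inverse_fst[OF assms(1) FE assms(3)] by metis
  define y where "y = g (fst l)"
  have y: "y \<in> F" "y \<in> Elev W m" using g(2) FE by (auto simp: y_def)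
  have "lnorm nrm m (l - y) \<le> (1 + K) * lnorm nrm m (s k - l)" for k
  proof -
    have sk: "s k \<in> F" "s k \<in> Elev W m" using s by auto
    have "s k - y = g (fst (s k - l))"
      using g(3)[OF sk(1)] by (simp add: y_def linear_diff[OF g(1)])
    then have "lnorm nrm m (s k - y) \<le> K * lnorm nrm m (s k - l)"
      using K order_trans[OF K(2) mult_left_mono[OF norm_fst_le_lnorm]] by metis
    moreover have "lnorm nrm m (l - y) \<le> lnorm nrm m (l - s k) + lnorm nrm m (s k - y)"
      using lnorm_triangle[of "l - s k" m "s k - y"] subspace_diff[OF subspace_Elev] l sk(2) y(2)
      by (metis diff_add_cancel add_diff_eq)
    moreover have "lnorm nrm m (l - s k) = lnorm nrm m (s k - l)"
      using lnorm_minus_commute[OF l sk(2)] .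
    ultimately show ?thesis by (simp add: algebra_simps)
  qed
  then have "l - y = 0"
    using le_0_if_le_times_null_seq[OF _ lim] subspace_diff[OF subspace_Elev l y(2)] lnorm_eq_0
    by blast
  then show "l \<in> F" using y by simp
next
  fix m x and e :: real
  assume "x \<in> F \<inter> Elev W m" "e > 0"
  then show "\<exists>y\<in>F \<inter> (\<Inter>k. Elev W k). lnorm nrm m (x - y) < e"
    using assms(2) by (intro bexI[of _ x]) (auto simp: lnorm_zero)
qed

end

lemma inj_on_fst_if_disjoint_Wsub:
  assumes "subspace S" "S \<inter> Wsub = {0}"
  shows "inj_on fst S"
proof (rule inj_onI)
  fix x y assume "x \<in> S" "y \<in> S" "fst x = fst y"
  then have "x - y \<in> S \<inter> Wsub" using assms(1) by (simp add: subspace_diff Wsub_def)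
  then show "x = y" using assms(2) by auto
qed

lemma cone_condition_add_Wsub_part:
  assumes "Nt \<subseteq> N" "K \<ge> 0"
    and bound: "\<And>a b. a \<in> N \<Longrightarrow> b \<in> P \<Longrightarrow> norm a \<le> K * norm (a + b)"
    and "c > 0"
    and cone: "\<And>n p. n \<in> N \<Longrightarrow> p \<in> P \<Longrightarrow> norm p \<le> c * norm n \<Longrightarrow> (n + p \<in> Cq \<longleftrightarrow> n \<in> Cq)"
  shows "\<exists>c'>0. \<forall>n\<in>Nt. \<forall>m\<in>{a + b | a b. a \<in> N \<inter> Wsub \<and> b \<in> P}.
           norm m \<le> c' * norm n \<longrightarrow> (n + m \<in> Cq \<longleftrightarrow> n \<in> Cq)"
proof (intro exI conjI ballI impI)
  show "c / (1 + K) > 0" using \<open>c > 0\<close> \<open>K \<ge> 0\<close> by simp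
  fix n m
  assume "n \<in> Nt" "m \<in> {a + b | a b. a \<in> N \<inter> Wsub \<and> b \<in> P}" and m: "norm m \<le> c / (1 + K) * norm n"
  then obtain w p where w: "w \<in> N" "w \<in> Wsub" and "p \<in> P" "m = w + p" by blast
  \<comment> \<open>the \<open>Wsub\<close> part is invisible to \<open>Cq\<close>, and the \<open>P\<close> part is small by the complement bound\<close>
  have "norm p \<le> norm m + norm w" using \<open>m = w + p\<close> norm_triangle_ineq4[of m w] by simp
  also have "\<dots> \<le> (1 + K) * norm m"
    using bound[OF w(1) \<open>p \<in> P\<close>] \<open>m = w + p\<close> by (simp add: algebra_simps)
  also have "\<dots> \<le> c * norm n" using m \<open>K \<ge> 0\<close> by (simp add: field_simps)
  finally have "n + p \<in> Cq \<longleftrightarrow> n \<in> Cq" using cone \<open>n \<in> Nt\<close> \<open>Nt \<subseteq> N\<close> \<open>p \<in> P\<close> by blast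
  then have "(n + p) + w \<in> Cq \<longleftrightarrow> n \<in> Cq" using Cq_add_Wsub[OF w(2)] by blast
  then show "n + m \<in> Cq \<longleftrightarrow> n \<in> Cq" using \<open>m = w + p\<close> by (simp add: ac_simps)
qed

lemma openin_Cq_Wsub_complement:
  fixes N Nt U :: "((real^'n) \<times> 'w::real_normed_vector) set"
  assumes "openin (top_of_set N) U" "U \<noteq> {}" "U \<subseteq> Cq"
    and "subspace N" "Nt \<subseteq> N" "N \<subseteq> {a + b | a b. a \<in> Nt \<and> b \<in> N \<inter> Wsub}"
  shows "\<exists>V. openin (top_of_set Nt) V \<and> V \<noteq> {} \<and> V \<subseteq> Nt \<inter> Cq"
proof -
  obtain T where "open T" "U = N \<inter> T" using assms(1) by (auto simp: openin_open)
  obtain x where "x \<in> U" using assms(2) by blast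
  then obtain a b where "a \<in> Nt" "b \<in> N" "b \<in> Wsub" "x = a + b" using assms(6) \<open>U = N \<inter> T\<close> by blast
  define V where "V = Nt \<inter> (\<lambda>y. y - b) ` T"
  have "openin (top_of_set Nt) V"
    unfolding V_def using \<open>open T\<close> by (intro openin_open_Int open_translation_subtract)
  moreover have "a \<in> V"
    using \<open>x \<in> U\<close> \<open>U = N \<inter> T\<close> \<open>a \<in> Nt\<close> \<open>x = a + b\<close> unfolding V_def by force
  moreover have "z \<in> Cq" if "z \<in> V" for z
  proof -
    have "z + b \<in> U"
      using that \<open>U = N \<inter> T\<close> \<open>b \<in> N\<close> assms(4,5) unfolding V_def by (auto intro: subspace_add)
    then show ?thesis using assms(3) Cq_add_Wsub[OF \<open>b \<in> Wsub\<close>] by blast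
  qed
  ultimately show ?thesis unfolding V_def by blast
qed

locale Wsub_splitting = sc_levels W nrm
  for W :: "nat \<Rightarrow> 'w::banach set" and nrm :: "nat \<Rightarrow> 'w \<Rightarrow> real" +
  fixes N Nt P :: "((real^'n) \<times> 'w) set"
  assumes complement: "sc_complement W nrm N P"
    and N_smooth: "N \<subseteq> (\<Inter>k. Elev W k)"
    and subspace_Nt: "subspace Nt" and Nt_subset: "Nt \<subseteq> N"
    and Nt_disjoint: "Nt \<inter> (N \<inter> Wsub) = {0}"
    and N_split: "N \<subseteq> {a + b | a b. a \<in> Nt \<and> b \<in> N \<inter> Wsub}"
begin

abbreviation Mt :: "((real^'n) \<times> 'w) set"
  where "Mt \<equiv> {a + b | a b. a \<in> N \<inter> Wsub \<and> b \<in> P}"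

lemma subspace_N: "subspace N" and subspace_P: "subspace P"
  using sc_complementD(1,2)[OF complement] sc_subspace_subspace by blast+

lemma Nt_smooth: "Nt \<subseteq> (\<Inter>k. Elev W k)"
  using N_smooth Nt_subset by blast

lemma Mt_level_split:
  assumes "x \<in> Mt" "x \<in> Elev W m"
  obtains w p where "w \<in> N \<inter> Wsub" "p \<in> P \<inter> Elev W m" "x = w + p"
proof -
  obtain w p where "w \<in> N \<inter> Wsub" "p \<in> P" "x = w + p" using assms(1) by blast
  moreover have "w \<in> Elev W m" using \<open>w \<in> N \<inter> Wsub\<close> N_smooth by blast
  then have "p \<in> Elev W m"
    using subspace_diff[OF subspace_Elev assms(2)] \<open>x = w + p\<close> by (metis add_diff_cancel_left')
  ultimately show ?thesis using that by blast
qed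

lemma Mt_level_closed:
  assumes s: "\<forall>k. s k \<in> Mt \<inter> Elev W m" and l: "l \<in> Elev W m"
    and lim: "(\<lambda>k. lnorm nrm m (s k - l)) \<longlonglongrightarrow> 0"
  shows "l \<in> Mt"
proof -
  have "\<exists>w p. w \<in> N \<inter> Wsub \<and> p \<in> P \<inter> Elev W m \<and> s k = w + p" for k
  proof -
    have "s k \<in> Mt" "s k \<in> Elev W m" using s by auto
    then obtain w p where "w \<in> N \<inter> Wsub" "p \<in> P \<inter> Elev W m" "s k = w + p"
      by (rule Mt_level_split)
    then show ?thesis by blast
  qed
  then obtain w p where w: "\<And>k. w k \<in> N \<inter> Wsub" and p: "\<And>k. p k \<in> P \<inter> Elev W m"
    and s_eq: "\<And>k. s k = w k + p k"
    by metis
  obtain a b where a: "a \<in> N \<inter> Elev W m" and b: "b \<in> P \<inter> Elev W m" and "l = a + b"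
    using sc_complementD(4)[OF complement l] by blast
  obtain K where K: "\<And>a b. a \<in> N \<inter> Elev W m \<Longrightarrow> b \<in> P \<inter> Elev W m \<Longrightarrow>
      lnorm nrm m a \<le> K * lnorm nrm m (a + b)"
    using sc_complement_bound[OF complement] by metis
  \<comment> \<open>\<open>a\<close> has the same \<open>\<real>\<^sup>n\<close>-part as \<open>a - w k\<close>, which the complement bound controls\<close>
  have "norm (fst a) \<le> K * lnorm nrm m (s k - l)" for k
  proof -
    have "w k \<in> N" "w k \<in> Elev W m" using w N_smooth by blast+
    then have "w k - a \<in> N \<inter> Elev W m" "p k - b \<in> P \<inter> Elev W m"
      using a b p subspace_diff[OF subspace_N] subspace_diff[OF subspace_P]
        subspace_diff[OF subspace_Elev] by blast+
    then have "lnorm nrm m (w k - a) \<le> K * lnorm nrm m ((w k - a) + (p k - b))"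
      by (rule K)
    moreover have "norm (fst a) = norm (fst (w k - a))" using w by (simp add: Wsub_def)
    ultimately have "norm (fst a) \<le> K * lnorm nrm m ((w k - a) + (p k - b))"
      using norm_fst_le_lnorm[of "w k - a" nrm m] by linarith
    then show ?thesis using s_eq \<open>l = a + b\<close> by (simp add: algebra_simps)
  qed
  then have "norm (fst a) \<le> 0" using lim by (rule le_0_if_le_times_null_seq)
  then have "a \<in> N \<inter> Wsub" using a by (simp add: Wsub_def)
  then show "l \<in> Mt" unfolding \<open>l = a + b\<close> using b by blast
qed

lemma sc_subspace_Mt: "sc_subspace W nrm Mt"
proof (rule sc_subspaceI)
  show "subspace Mt"
    by (intro subspace_sums subspace_inter subspace_N subspace_P subspace_Wsub)
next
  fix m s l
  assume "\<forall>k. s k \<in> Mt \<inter> Elev W m" "l \<in> Elev W m" "(\<lambda>k. lnorm nrm m (s k - l)) \<longlonglongrightarrow> 0"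
  then show "l \<in> Mt" by (rule Mt_level_closed)
next
  fix m x and e :: real
  assume "x \<in> Mt \<inter> Elev W m" "e > 0"
  then obtain w p where w: "w \<in> N \<inter> Wsub" and p: "p \<in> P \<inter> Elev W m" and "x = w + p"
    using Mt_level_split by blast
  obtain y where "y \<in> P" "y \<in> (\<Inter>k. Elev W k)" "lnorm nrm m (p - y) < e"
    using sc_subspace_dense[OF sc_complementD(2)[OF complement] p \<open>e > 0\<close>] .
  have "w \<in> (\<Inter>k. Elev W k)" using w N_smooth by blast
  then have "w + y \<in> (\<Inter>k. Elev W k)"
    using subspace_add[OF subspace_smooth_Elev _ \<open>y \<in> (\<Inter>k. Elev W k)\<close>] by blast
  moreover have "w + y \<in> Mt" using w \<open>y \<in> P\<close> by blast
  moreover have "lnorm nrm m (x - (w + y)) < e"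
    using \<open>x = w + p\<close> \<open>lnorm nrm m (p - y) < e\<close> by (simp add: algebra_simps)
  ultimately show "\<exists>y\<in>Mt \<inter> (\<Inter>k. Elev W k). lnorm nrm m (x - y) < e" by blast
qed

lemma inj_on_fst_Nt: "inj_on fst Nt"
  using inj_on_fst_if_disjoint_Wsub[OF subspace_Nt] Nt_subset Nt_disjoint by blast

lemma Nt_inter_Mt: "Nt \<inter> Mt = {0}"
proof
  show "Nt \<inter> Mt \<subseteq> {0}"
  proof
    fix t assume "t \<in> Nt \<inter> Mt"
    then obtain w p where "t \<in> Nt" "w \<in> N \<inter> Wsub" "p \<in> P" "t = w + p" by blast
    then have "t - w \<in> N" using subspace_diff[OF subspace_N] Nt_subset by blast
    then have "p = 0" using sc_complementD(3)[OF complement] \<open>p \<in> P\<close> \<open>t = w + p\<close> by auto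
    then show "t \<in> {0}" using Nt_disjoint \<open>t \<in> Nt\<close> \<open>w \<in> N \<inter> Wsub\<close> \<open>t = w + p\<close> by auto
  qed
  have "0 \<in> N \<inter> Wsub" "0 \<in> P"
    using subspace_0 subspace_N subspace_Wsub subspace_P by blast+
  then have "0 + 0 \<in> Mt" by blast
  then show "{0} \<subseteq> Nt \<inter> Mt" using subspace_0[OF subspace_Nt] by simp
qed

lemma Nt_Mt_level_split:
  assumes "x \<in> Elev W m"
  shows "\<exists>t\<in>Nt \<inter> Elev W m. \<exists>y\<in>Mt \<inter> Elev W m. x = t + y"
proof -
  obtain a b where "a \<in> N" "b \<in> P \<inter> Elev W m" "x = a + b"
    using sc_complementD(4)[OF complement assms] by blast
  then obtain t w where "t \<in> Nt" "w \<in> N \<inter> Wsub" "a = t + w" using N_split by blast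
  have "w \<in> Elev W m" "t \<in> Elev W m"
    using \<open>w \<in> N \<inter> Wsub\<close> \<open>t \<in> Nt\<close> Nt_smooth N_smooth by blast+
  then have "w + b \<in> Mt \<inter> Elev W m"
    using \<open>w \<in> N \<inter> Wsub\<close> \<open>b \<in> P \<inter> Elev W m\<close> subspace_add[OF subspace_Elev] by blast
  moreover have "x = t + (w + b)" using \<open>x = a + b\<close> \<open>a = t + w\<close> by (simp add: add.assoc)
  ultimately show ?thesis using \<open>t \<in> Nt\<close> \<open>t \<in> Elev W m\<close> by blast
qed

lemma Nt_Mt_level_bound:
  "\<exists>K. \<forall>t\<in>Nt \<inter> Elev W m. \<forall>y\<in>Mt \<inter> Elev W m. lnorm nrm m t \<le> K * lnorm nrm m (t + y)"
proof -
  obtain K1 where K1: "\<And>a b. a \<in> N \<inter> Elev W m \<Longrightarrow> b \<in> P \<inter> Elev W m \<Longrightarrow>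
      lnorm nrm m a \<le> K1 * lnorm nrm m (a + b)"
    using sc_complement_bound[OF complement] by metis
  obtain K2 where "K2 \<ge> 0" and K2: "\<And>t. t \<in> Nt \<Longrightarrow> lnorm nrm m t \<le> K2 * norm (fst t)"
    using lnorm_le_norm_fst[OF subspace_Nt _ inj_on_fst_Nt] Nt_smooth by blast
  \<comment> \<open>adding \<open>w \<in> Wsub\<close> leaves the \<open>\<real>\<^sup>n\<close>-part of \<open>t\<close> unchanged and lands in \<open>N\<close>\<close>
  have "lnorm nrm m t \<le> K2 * K1 * lnorm nrm m (t + y)"
    if "t \<in> Nt" "y \<in> Mt" "y \<in> Elev W m" for t y
  proof -
    obtain w p where w: "w \<in> N \<inter> Wsub" and p: "p \<in> P \<inter> Elev W m" and "y = w + p"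
      using Mt_level_split[OF \<open>y \<in> Mt\<close> \<open>y \<in> Elev W m\<close>] by blast
    have "t \<in> Elev W m" "w \<in> Elev W m" using w \<open>t \<in> Nt\<close> Nt_smooth N_smooth by blast+
    then have "t + w \<in> Elev W m" by (rule subspace_add[OF subspace_Elev])
    moreover have "t + w \<in> N" using w \<open>t \<in> Nt\<close> Nt_subset subspace_add[OF subspace_N] by blast
    ultimately have "t + w \<in> N \<inter> Elev W m" by blast
    from K1[OF this p] have "lnorm nrm m (t + w) \<le> K1 * lnorm nrm m (t + y)"
      using \<open>y = w + p\<close> by (simp add: add.assoc)
    moreover have "norm (fst t) = norm (fst (t + w))" using w by (simp add: Wsub_def)
    ultimately have "norm (fst t) \<le> K1 * lnorm nrm m (t + y)"
      using norm_fst_le_lnorm[of "t + w" nrm m] by linarith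
    then show ?thesis
      using K2[OF \<open>t \<in> Nt\<close>] \<open>K2 \<ge> 0\<close> by (metis mult.assoc mult_left_mono order_trans)
  qed
  then show ?thesis by blast
qed

lemma sc_complement_Nt_Mt: "sc_complement W nrm Nt Mt"
  using sc_subspace_if_smooth_graph[OF subspace_Nt Nt_smooth inj_on_fst_Nt]
    sc_subspace_Mt Nt_inter_Mt Nt_Mt_level_split Nt_Mt_level_bound
  by (rule sc_complementI)

end

theorem lemma6p7:
  fixes W :: "nat \<Rightarrow> 'w::banach set" and nrm :: "nat \<Rightarrow> 'w \<Rightarrow> real"
    and N Nperp Nt :: "((real^'n) \<times> 'w) set"
  assumes "sc_banach W nrm"
    and "subspace N" and "\<exists>B. finite B \<and> N = span B"
    and "good_position W nrm N"
    and "good_complement W nrm N Nperp"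
    and "subspace Nt" and "Nt \<subseteq> N" and "Nt \<inter> (N \<inter> Wsub) = {0}"
    and "{a + b | a b. a \<in> Nt \<and> b \<in> N \<inter> Wsub} = N"
  shows "good_position W nrm Nt \<and>
         good_complement W nrm Nt {a + b | a b. a \<in> N \<inter> Wsub \<and> b \<in> Nperp}"
proof -
  interpret sc_levels W nrm by (rule sc_levels.intro) (fact assms(1))
  have compl: "sc_complement W nrm N Nperp"
    and "\<exists>c>0. \<forall>n\<in>N. \<forall>p\<in>Nperp. norm p \<le> c * norm n \<longrightarrow> (n + p \<in> Cq \<longleftrightarrow> n \<in> Cq)"
    using assms(5) unfolding good_complement_def by blast+
  then obtain c where "c > 0"
    and cone: "\<And>n p. n \<in> N \<Longrightarrow> p \<in> Nperp \<Longrightarrow> norm p \<le> c * norm n \<Longrightarrow> (n + p \<in> Cq \<longleftrightarrow> n \<in> Cq)"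
    by blast
  obtain K where "K \<ge> 0" and bound: "\<And>a b. a \<in> N \<Longrightarrow> b \<in> Nperp \<Longrightarrow> norm a \<le> K * norm (a + b)"
    using sc_complement_norm_bound[OF compl] by metis
  obtain B where "finite B" "N = span B" using assms(3) by blast
  then have "N \<subseteq> (\<Inter>k. Elev W k)"
    using finite_dim_sc_subspace_smooth[OF sc_complementD(1)[OF compl]] by blast
  interpret Wsub_splitting W nrm N Nt Nperp
    by (intro Wsub_splitting.intro Wsub_splitting_axioms.intro sc_levels_axioms compl
        \<open>N \<subseteq> (\<Inter>k. Elev W k)\<close> assms(6-8) equalityD2[OF assms(9)])
  obtain U where "openin (top_of_set N) U" "U \<noteq> {}" "U \<subseteq> N \<inter> Cq"
    using assms(4) unfolding good_position_def by blast
  then have "\<exists>V. openin (top_of_set Nt) V \<and> V \<noteq> {} \<and> V \<subseteq> Nt \<inter> Cq"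
    using openin_Cq_Wsub_complement[OF _ _ _ assms(2,7) N_split] by blast
  moreover have "good_complement W nrm Nt Mt"
    unfolding good_complement_def
    using sc_complement_Nt_Mt cone_condition_add_Wsub_part[OF assms(7) \<open>K \<ge> 0\<close> bound \<open>c > 0\<close> cone]
    by (rule conjI)
  ultimately show ?thesis unfolding good_position_def by blast
qed

end
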